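(* Let $\mathbb{F}$ be $\mathbb{R}$ or $\mathbb{C}$. Let $U,V\in\mathbb{F}(\epsilon)^{r\times n}$, $A_0\in\mathbb{F}(\epsilon)^{r\times r}$, let $X$ be the $n\times n$ diagonal matrix with diagonal entries $x_1,\ldots,x_n$, and let $P=\det(A_0+UXV^T)$. Let $X'$ be the $(2n+r)\times(2n+r)$ diagonal matrix with diagonal entries $x_1,\ldots,x_{2n+r}$. Then there exist $U',V'\in\mathbb{F}(\epsilon)^{(n+r)\times(2n+r)}$ such that: (i) if $Q$ denotes the polynomial in $x_1,\ldots,x_n$ obtained by setting $x_{n+1}=\cdots=x_{2n+r}=1$ in $\det(U'X'V'^T)$, then $P=Q$; (ii) if $\lim_{\epsilon\to0}P$ exists, then $\lim_{\epsilon\to0}\det(U'X'V'^T)$ also exists.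
   Context: $\mathbb{F}(\epsilon)$ is the field of rational functions in the indeterminate $\epsilon$; $x_1,\ldots,x_{2n+r}$ are indeterminates. For a polynomial in the $x_i$ with coefficients in $\mathbb{F}(\epsilon)$, its limit as $\epsilon\to0$ is said to exist if the limit at $\epsilon=0$ of the coefficient of every monomial exists, and the limit is then taken coefficientwise. *)

theory Defs
  imports Complex_Main "HOL-Library.Poly_Mapping" "HOL-Computational_Algebra.Polynomial"
    "HOL-Computational_Algebra.Fraction_Field" "Jordan_Normal_Form.Determinant"
begin

(* F(eps): rational functions in eps over the field 'a, as 'a poly fract.
   Polynomials in x_1, x_2, ... over F(eps): (nat \<Rightarrow>\<^sub>0 nat) \<Rightarrow>\<^sub>0 'a poly fract
   (monomial = exponent vector, variable x_i has index i). *)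

type_synonym 'a rfun = "'a poly fract"
type_synonym 'a mpoly_rf = "(nat \<Rightarrow>\<^sub>0 nat) \<Rightarrow>\<^sub>0 'a rfun"

definition const_mp :: "'a::field rfun \<Rightarrow> 'a mpoly_rf" where
  "const_mp c = Poly_Mapping.single 0 c"

definition var_mp :: "nat \<Rightarrow> 'a::field mpoly_rf" where
  "var_mp i = Poly_Mapping.single (Poly_Mapping.single i 1) 1"

definition lift_mat :: "'a::field rfun mat \<Rightarrow> 'a mpoly_rf mat" where
  "lift_mat A = map_mat const_mp A"

definition diag_var :: "nat \<Rightarrow> 'a::field mpoly_rf mat" where
  "diag_var k = mat k k (\<lambda>(i,j). if i = j then var_mp (i+1) else 0)"

definition restrict_mon :: "nat \<Rightarrow> (nat \<Rightarrow>\<^sub>0 nat) \<Rightarrow> (nat \<Rightarrow>\<^sub>0 nat)" where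
  "restrict_mon n m = (\<Sum>i \<in> Poly_Mapping.keys m \<inter> {1..n}. Poly_Mapping.single i (Poly_Mapping.lookup m i))"

(* substitute x_i := 1 for all i > n (and i = 0, which never occurs) *)
definition subst_one :: "nat \<Rightarrow> 'a::field mpoly_rf \<Rightarrow> 'a mpoly_rf" where
  "subst_one n p = (\<Sum>m \<in> Poly_Mapping.keys p. Poly_Mapping.single (restrict_mon n m) (Poly_Mapping.lookup p m))"

definition rf_lim_exists :: "'a::real_normed_field rfun \<Rightarrow> bool" where
  "rf_lim_exists f \<longleftrightarrow> (\<exists>p q. q \<noteq> 0 \<and> f = Fract p q \<and>
      (\<exists>L. ((\<lambda>e. poly p e / poly q e) \<longlongrightarrow> L) (at 0)))"

definition mp_lim_exists :: "'a::real_normed_field mpoly_rf \<Rightarrow> bool" where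
  "mp_lim_exists P \<longleftrightarrow> (\<forall>m. rf_lim_exists (Poly_Mapping.lookup P m))"

end

theory Submission
  imports Defs
begin

(* By the Schur complement, P = det M for M = [[A0, U X], [-V^T, I_n]]. Every entry of M is a
   coefficient times a monomial, as is every entry of D = U' X' V'^T: the coefficients are the
   same, and D differs from M only in that each entry outside the block U X carries the new
   variable x_(n+k+1) of its column k. Setting the new variables to 1 thus turns the expansion of
   det D term by term into that of det M. Moreover, x_(n+k+1) is missing from the term of a
   permutation exactly when column k (k >= r) contributes the variable x_(k-r+1), so the exponent
   vector of a term of det D is determined by its part in x_1, ..., x_n. Hence no two distinct
   monomials of det D merge under the substitution: every coefficient of det D is zero or a
   coefficient of P, and limits pass from P to det D. *)

lemma prod_single:
  "finite A \<Longrightarrow> (\<Prod>i\<in>A. Poly_Mapping.single (w i) (c i) :: 'k::comm_monoid_add \<Rightarrow>\<^sub>0 'b::comm_semiring_1)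
     = Poly_Mapping.single (\<Sum>i\<in>A. w i) (\<Prod>i\<in>A. c i)"
  by (induct A rule: finite_induct) (simp_all add: mult_single)

lemma det_monomial_entries:
  fixes M :: "('k::comm_monoid_add \<Rightarrow>\<^sub>0 'b::comm_ring_1) mat"
  assumes M: "M \<in> carrier_mat N N"
    and entries: "\<And>i k. i < N \<Longrightarrow> k < N \<Longrightarrow> M $$ (i, k) = Poly_Mapping.single (w i k) (c i k)"
  shows "det M = (\<Sum>p | p permutes {0..<N}.
     Poly_Mapping.single (\<Sum>i=0..<N. w i (p i)) (signof p * (\<Prod>i=0..<N. c i (p i))))"
  unfolding det_def'[OF M]
proof (rule sum.cong[OF refl])
  fix p assume "p \<in> {p. p permutes {0..<N}}"
  then have "\<And>i. i < N \<Longrightarrow> p i < N" by (auto simp: permutes_in_image)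
  then have "(\<Prod>i=0..<N. M $$ (i, p i)) = (\<Prod>i=0..<N. Poly_Mapping.single (w i (p i)) (c i (p i)))"
    by (intro prod.cong) (auto simp: entries)
  also have "\<dots> = Poly_Mapping.single (\<Sum>i=0..<N. w i (p i)) (\<Prod>i=0..<N. c i (p i))"
    by (simp add: prod_single)
  finally show "signof p * (\<Prod>i=0..<N. M $$ (i, p i))
      = Poly_Mapping.single (\<Sum>i=0..<N. w i (p i)) (signof p * (\<Prod>i=0..<N. c i (p i)))"
    by (simp add: mult_single flip: single_of_int)
qed

lemma lookup_restrict_mon:
  "Poly_Mapping.lookup (restrict_mon n m) t = (Poly_Mapping.lookup m t when t \<in> {1..n})"
  unfolding restrict_mon_def lookup_sum
  by (auto simp: lookup_single when_def in_keys_iff sum.delta)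

lemma restrict_mon_single:
  "restrict_mon n (Poly_Mapping.single t c) = (if t \<in> {1..n} then Poly_Mapping.single t c else 0)"
  by (rule poly_mapping_eqI) (auto simp: lookup_restrict_mon lookup_single when_def)

lemma restrict_mon_sum: "restrict_mon n (\<Sum>i\<in>I. f i) = (\<Sum>i\<in>I. restrict_mon n (f i))"
proof (induct I rule: infinite_finite_induct)
  case (insert i I)
  have "restrict_mon n (f i + (\<Sum>i\<in>I. f i)) = restrict_mon n (f i) + restrict_mon n (\<Sum>i\<in>I. f i)"
    by (rule poly_mapping_eqI) (simp add: lookup_restrict_mon lookup_add when_def)
  with insert show ?case by simp
qed (simp_all add: restrict_mon_def)

definition shift_mon :: "nat \<Rightarrow> (nat \<Rightarrow>\<^sub>0 'a::comm_monoid_add) \<Rightarrow> (nat \<Rightarrow>\<^sub>0 'a)" where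
  "shift_mon d m = (\<Sum>t\<in>Poly_Mapping.keys m. Poly_Mapping.single (t + d) (Poly_Mapping.lookup m t))"

lemma lookup_shift_mon:
  "Poly_Mapping.lookup (shift_mon d m) t = (if d \<le> t then Poly_Mapping.lookup m (t - d) else 0)"
proof -
  have "Poly_Mapping.lookup (shift_mon d m) t
      = (\<Sum>s\<in>Poly_Mapping.keys m. if s = t - d \<and> d \<le> t then Poly_Mapping.lookup m s else 0)"
    unfolding shift_mon_def lookup_sum by (intro sum.cong) (auto simp: lookup_single when_def)
  then show ?thesis by (auto simp: sum.delta in_keys_iff)
qed

lemma shift_mon_single: "shift_mon d (Poly_Mapping.single t c) = Poly_Mapping.single (t + d) c"
  by (rule poly_mapping_eqI) (auto simp: lookup_shift_mon lookup_single when_def)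

lemma shift_mon_sum: "shift_mon d (\<Sum>i\<in>I. f i) = (\<Sum>i\<in>I. shift_mon d (f i))"
proof (induct I rule: infinite_finite_induct)
  case (insert i I)
  have "shift_mon d (f i + (\<Sum>i\<in>I. f i)) = shift_mon d (f i) + shift_mon d (\<Sum>i\<in>I. f i)"
    by (rule poly_mapping_eqI) (simp add: lookup_shift_mon lookup_add)
  with insert show ?case by simp
qed (simp_all add: shift_mon_def)

lemma lookup_subst_one:
  assumes "finite K" "Poly_Mapping.keys p \<subseteq> K"
  shows "Poly_Mapping.lookup (subst_one n p) m
    = (\<Sum>k\<in>K. Poly_Mapping.lookup p k when restrict_mon n k = m)"
  unfolding subst_one_def lookup_sum lookup_single
  by (rule sum.mono_neutral_left) (use assms in \<open>auto simp: in_keys_iff\<close>)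

lemma subst_one_single:
  "subst_one n (Poly_Mapping.single k c) = Poly_Mapping.single (restrict_mon n k) c"
  by (rule poly_mapping_eqI) (auto simp: lookup_subst_one[of "{k}"] lookup_single when_def)

lemma subst_one_sum: "subst_one n (\<Sum>i\<in>I. f i) = (\<Sum>i\<in>I. subst_one n (f i))"
proof (induct I rule: infinite_finite_induct)
  case (insert i I)
  let ?K = "Poly_Mapping.keys (f i) \<union> Poly_Mapping.keys (\<Sum>i\<in>I. f i)"
  have "Poly_Mapping.keys (f i + (\<Sum>i\<in>I. f i)) \<subseteq> ?K" by (rule keys_add)
  then have "subst_one n (f i + (\<Sum>i\<in>I. f i)) = subst_one n (f i) + subst_one n (\<Sum>i\<in>I. f i)"
    by (intro poly_mapping_eqI)
      (simp add: lookup_add lookup_subst_one[of ?K] when_add_distrib sum.distrib)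
  with insert show ?case by simp
qed (simp_all add: subst_one_def)

lemma lookup_subst_one_restrict_mon:
  assumes inj: "inj_on (restrict_mon n) (Poly_Mapping.keys p)" and m: "m \<in> Poly_Mapping.keys p"
  shows "Poly_Mapping.lookup (subst_one n p) (restrict_mon n m) = Poly_Mapping.lookup p m"
proof -
  have "Poly_Mapping.lookup (subst_one n p) (restrict_mon n m)
      = (\<Sum>k\<in>Poly_Mapping.keys p. if k = m then Poly_Mapping.lookup p k else 0)"
    by (subst lookup_subst_one[OF finite_keys order_refl], intro sum.cong)
      (use inj m in \<open>auto simp: when_def inj_on_eq_iff\<close>)
  with m show ?thesis by simp
qed

lemma rf_lim_exists_zero: "rf_lim_exists (0 :: 'a::real_normed_field rfun)"
  unfolding rf_lim_exists_def by (rule exI[of _ 0], rule exI[of _ 1]) (auto simp: Zero_fract_def)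

lemma mp_lim_exists_of_subst_one:
  assumes inj: "inj_on (restrict_mon n) (Poly_Mapping.keys p)"
    and lim: "mp_lim_exists (subst_one n p)"
  shows "mp_lim_exists p"
  unfolding mp_lim_exists_def
proof
  fix m
  show "rf_lim_exists (Poly_Mapping.lookup p m)"
  proof (cases "m \<in> Poly_Mapping.keys p")
    case True
    with lim show ?thesis
      unfolding mp_lim_exists_def by (metis lookup_subst_one_restrict_mon[OF inj])
  qed (simp add: in_keys_iff rf_lim_exists_zero)
qed

lemma subst_one_sum_single:
  assumes "\<And>p. p \<in> I \<Longrightarrow> restrict_mon n (e p) = e' p"
  shows "subst_one n (\<Sum>p\<in>I. Poly_Mapping.single (e p) (a p))
    = (\<Sum>p\<in>I. Poly_Mapping.single (e' p) (a p))"
  using assms by (simp add: subst_one_sum subst_one_single)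

lemma inj_on_restrict_mon_keys_sum_single:
  assumes restrict: "\<And>p. p \<in> I \<Longrightarrow> restrict_mon n (e p) = e' p"
    and determined: "\<And>p q. p \<in> I \<Longrightarrow> q \<in> I \<Longrightarrow> e' p = e' q \<Longrightarrow> e p = e q"
  shows "inj_on (restrict_mon n) (Poly_Mapping.keys (\<Sum>p\<in>I. Poly_Mapping.single (e p) (a p)))"
proof (rule inj_on_subset)
  show "inj_on (restrict_mon n) (e ` I)"
  proof (rule inj_onI)
    fix x y assume "x \<in> e ` I" "y \<in> e ` I" and eq: "restrict_mon n x = restrict_mon n y"
    then obtain p q where "p \<in> I" "q \<in> I" "x = e p" "y = e q" by blast
    with eq show "x = y" using restrict determined by metis
  qed
  have "Poly_Mapping.keys (\<Sum>p\<in>I. Poly_Mapping.single (e p) (a p))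
      \<subseteq> (\<Union>p\<in>I. Poly_Mapping.keys (Poly_Mapping.single (e p) (a p)))"
    by (rule keys_sum)
  also have "\<dots> \<subseteq> e ` I" by auto
  finally show "Poly_Mapping.keys (\<Sum>p\<in>I. Poly_Mapping.single (e p) (a p)) \<subseteq> e ` I" .
qed

lemma det_four_block_mat_minus_one:
  fixes A :: "'a::idom mat"
  assumes A: "A \<in> carrier_mat r r" and B: "B \<in> carrier_mat r n" and W: "W \<in> carrier_mat n r"
  shows "det (four_block_mat A B (- W) (1\<^sub>m n)) = det (A + B * W)"
proof -
  let ?M = "four_block_mat A B (- W) (1\<^sub>m n)"
  let ?L = "four_block_mat (1\<^sub>m r) (0\<^sub>m r n) W (1\<^sub>m n)"
  have AW: "A + B * W \<in> carrier_mat r r" using A B W by auto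
  have "?M * ?L = four_block_mat (A * 1\<^sub>m r + B * W) (A * 0\<^sub>m r n + B * 1\<^sub>m n)
      (- W * 1\<^sub>m r + 1\<^sub>m n * W) (- W * 0\<^sub>m r n + 1\<^sub>m n * 1\<^sub>m n)"
    by (rule mult_four_block_mat) (use A B W in auto)
  also have "\<dots> = four_block_mat (A + B * W) B (0\<^sub>m n r) (1\<^sub>m n)"
    using A B W by simp
  finally have "det ?M * det ?L = det (A + B * W)"
    using det_mult[of ?M "r + n" ?L] A B W
      det_four_block_mat_lower_left_zero[OF AW B refl one_carrier_mat] by simp
  moreover have "det ?L = 1"
    using det_four_block_mat_upper_right_zero[OF one_carrier_mat refl W one_carrier_mat] by simp
  ultimately show ?thesis by simp
qed

lemma const_mp_mult_var_mp:
  "const_mp c * var_mp j = Poly_Mapping.single (Poly_Mapping.single j 1) c"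
  unfolding const_mp_def var_mp_def by (simp add: mult_single)

lemma lift_mat_carrier [simp]: "lift_mat A \<in> carrier_mat m N \<longleftrightarrow> A \<in> carrier_mat m N"
  unfolding lift_mat_def by simp

lemma index_lift_mat:
  "i < dim_row A \<Longrightarrow> j < dim_col A \<Longrightarrow> lift_mat A $$ (i, j) = const_mp (A $$ (i, j))"
  by (simp add: lift_mat_def)

lemma diag_var_carrier [simp]: "diag_var N \<in> carrier_mat N N"
  by (simp add: diag_var_def)

lemma index_mult_diag_var:
  assumes "A \<in> carrier_mat m N" "i < m" "l < N"
  shows "(A * diag_var N) $$ (i, l) = A $$ (i, l) * var_mp (l + 1)"
proof -
  have "(A * diag_var N) $$ (i, l) = (\<Sum>k\<in>{0..<N}. A $$ (i, k) * diag_var N $$ (k, l))"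
    using assms by (auto simp: scalar_prod_def diag_var_def intro!: sum.cong)
  also have "\<dots> = (\<Sum>k\<in>{0..<N}. if k = l then A $$ (i, k) * var_mp (k + 1) else 0)"
    using assms by (intro sum.cong) (auto simp: diag_var_def)
  finally show ?thesis using assms by simp
qed

lemma index_lift_diag_var_mult:
  assumes A: "A \<in> carrier_mat m N" and B: "B \<in> carrier_mat m' N" and i: "i < m" and k: "k < m'"
  shows "(lift_mat A * diag_var N * transpose_mat (lift_mat B)) $$ (i, k)
    = (\<Sum>l\<in>{0..<N}. Poly_Mapping.single (Poly_Mapping.single (l + 1) 1) (A $$ (i, l) * B $$ (k, l)))"
proof -
  have "(lift_mat A * diag_var N * transpose_mat (lift_mat B)) $$ (i, k)
      = (\<Sum>l\<in>{0..<N}. (lift_mat A * diag_var N) $$ (i, l) * transpose_mat (lift_mat B) $$ (l, k))"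
    using A B i k by (auto simp: scalar_prod_def lift_mat_def diag_var_def intro!: sum.cong)
  also have "\<dots> = (\<Sum>l\<in>{0..<N}. const_mp (A $$ (i, l)) * var_mp (l + 1) * const_mp (B $$ (k, l)))"
    using A B i k by (intro sum.cong) (auto simp: index_mult_diag_var index_lift_mat)
  finally show ?thesis by (simp add: const_mp_def var_mp_def mult_single)
qed

definition mon_P :: "nat \<Rightarrow> nat \<Rightarrow> nat \<Rightarrow> (nat \<Rightarrow>\<^sub>0 nat)" where
  "mon_P r i k = (if i < r \<and> r \<le> k then Poly_Mapping.single (k - r + 1) 1 else 0)"

definition mon_D :: "nat \<Rightarrow> nat \<Rightarrow> nat \<Rightarrow> nat \<Rightarrow> (nat \<Rightarrow>\<^sub>0 nat)" where
  "mon_D n r i k = (if i < r \<and> r \<le> k then Poly_Mapping.single (k - r + 1) 1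
     else Poly_Mapping.single (n + k + 1) 1)"

(* With C = [[A0, U], [-V^T, I_n]]: U' = [[U, A0, 0], [0, -V^T, I_n]] and
   V' = [[0, I_r, 0], [I_n, 0, I_n]], so that the entry (i, k) of U' X' V'^T is C_ik times
   the monomial mon_D n r i k. *)
definition ext_U :: "nat \<Rightarrow> nat \<Rightarrow> 'a::zero mat \<Rightarrow> 'a mat" where
  "ext_U n r C = mat (n + r) (2 * n + r) (\<lambda>(i, l).
     if l < n then (if i < r then C $$ (i, l + r) else 0)
     else if i < r \<and> r \<le> l - n then 0 else C $$ (i, l - n))"

definition ext_V :: "nat \<Rightarrow> nat \<Rightarrow> 'a::zero_neq_one mat" where
  "ext_V n r = mat (n + r) (2 * n + r) (\<lambda>(k, l). if l = n + k \<or> (r \<le> k \<and> l = k - r) then 1 else 0)"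

lemma ext_U_carrier [simp]: "ext_U n r C \<in> carrier_mat (n + r) (2 * n + r)"
  by (simp add: ext_U_def)

lemma ext_V_carrier [simp]: "ext_V n r \<in> carrier_mat (n + r) (2 * n + r)"
  by (simp add: ext_V_def)

lemma index_ext_U_diag_ext_V:
  fixes C :: "'a::field rfun mat"
  assumes i: "i < n + r" and k: "k < n + r"
  shows "(lift_mat (ext_U n r C) * diag_var (2 * n + r) * transpose_mat (lift_mat (ext_V n r))) $$ (i, k)
    = Poly_Mapping.single (mon_D n r i k) (C $$ (i, k))"
proof -
  let ?U = "ext_U n r C"
  have "(lift_mat ?U * diag_var (2 * n + r) * transpose_mat (lift_mat (ext_V n r))) $$ (i, k)
      = (\<Sum>l\<in>{0..<2 * n + r}. Poly_Mapping.single (Poly_Mapping.single (l + 1) 1) (?U $$ (i, l) * ext_V n r $$ (k, l)))"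
    by (rule index_lift_diag_var_mult) (use i k in auto)
  also have "\<dots> = (\<Sum>l\<in>{0..<2 * n + r}.
        (if l = n + k then Poly_Mapping.single (Poly_Mapping.single (n + k + 1) 1) (?U $$ (i, n + k)) else 0)
      + (if r \<le> k \<and> l = k - r then Poly_Mapping.single (Poly_Mapping.single (k - r + 1) 1) (?U $$ (i, k - r)) else 0))"
    using k by (intro sum.cong) (auto simp: ext_V_def)
  also have "\<dots> = Poly_Mapping.single (Poly_Mapping.single (n + k + 1) 1) (?U $$ (i, n + k))
      + (if r \<le> k then Poly_Mapping.single (Poly_Mapping.single (k - r + 1) 1) (?U $$ (i, k - r)) else 0)"
    using k by (auto simp: sum.distrib)
  also have "\<dots> = Poly_Mapping.single (mon_D n r i k) (C $$ (i, k))"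
    using i k by (auto simp: ext_U_def mon_D_def)
  finally show ?thesis .
qed

lemma index_schur_block:
  fixes U V A0 :: "'a::field rfun mat"
  assumes U: "U \<in> carrier_mat r n" and V: "V \<in> carrier_mat r n" and A0: "A0 \<in> carrier_mat r r"
    and i: "i < r + n" and k: "k < r + n"
  shows "four_block_mat (lift_mat A0) (lift_mat U * diag_var n) (- transpose_mat (lift_mat V)) (1\<^sub>m n) $$ (i, k)
    = Poly_Mapping.single (mon_P r i k) (four_block_mat A0 U (- transpose_mat V) (1\<^sub>m n) $$ (i, k))"
proof (cases "i < r \<and> r \<le> k")
  case True
  then have "i < r" "k - r < n" using k by auto
  with U have "(lift_mat U * diag_var n) $$ (i, k - r)
      = Poly_Mapping.single (Poly_Mapping.single (k - r + 1) 1) (U $$ (i, k - r))"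
    by (simp add: index_mult_diag_var[of "lift_mat U" r n] index_lift_mat const_mp_mult_var_mp)
  with True U V A0 i k show ?thesis by (simp add: mon_P_def lift_mat_def)
next
  case False
  with U V A0 i k show ?thesis
    by (auto simp: mon_P_def index_lift_mat const_mp_def single_uminus)
qed

lemma restrict_mon_mon_D: "k < n + r \<Longrightarrow> restrict_mon n (mon_D n r i k) = mon_P r i k"
  by (auto simp: mon_D_def mon_P_def restrict_mon_single)

lemma mon_D_add_shift_mon_P:
  "mon_D n r i k + shift_mon (n + r) (mon_P r i k) = mon_P r i k + Poly_Mapping.single (n + k + 1) 1"
proof (cases "i < r \<and> r \<le> k")
  case True
  then have "k - r + 1 + (n + r) = n + k + 1" by simp
  with True show ?thesis by (simp add: mon_D_def mon_P_def shift_mon_single add.commute)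
next
  case False
  then show ?thesis by (auto simp: mon_D_def mon_P_def shift_mon_def)
qed

definition perm_mon_P :: "nat \<Rightarrow> nat \<Rightarrow> (nat \<Rightarrow> nat) \<Rightarrow> (nat \<Rightarrow>\<^sub>0 nat)" where
  "perm_mon_P n r p = (\<Sum>i=0..<n + r. mon_P r i (p i))"

definition perm_mon_D :: "nat \<Rightarrow> nat \<Rightarrow> (nat \<Rightarrow> nat) \<Rightarrow> (nat \<Rightarrow>\<^sub>0 nat)" where
  "perm_mon_D n r p = (\<Sum>i=0..<n + r. mon_D n r i (p i))"

lemma perm_mon_D_add_shift_mon:
  assumes p: "p permutes {0..<n + r}"
  shows "perm_mon_D n r p + shift_mon (n + r) (perm_mon_P n r p)
    = perm_mon_P n r p + (\<Sum>k=0..<n + r. Poly_Mapping.single (n + k + 1) 1)"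
proof -
  have "perm_mon_D n r p + shift_mon (n + r) (perm_mon_P n r p)
      = (\<Sum>i=0..<n + r. mon_D n r i (p i) + shift_mon (n + r) (mon_P r i (p i)))"
    by (simp add: perm_mon_D_def perm_mon_P_def shift_mon_sum sum.distrib)
  also have "\<dots> = (\<Sum>i=0..<n + r. mon_P r i (p i) + Poly_Mapping.single (n + p i + 1) 1)"
    by (simp only: mon_D_add_shift_mon_P)
  also have "\<dots> = perm_mon_P n r p + (\<Sum>i=0..<n + r. Poly_Mapping.single (n + p i + 1) 1)"
    by (simp only: perm_mon_P_def sum.distrib)
  also have "(\<Sum>i=0..<n + r. Poly_Mapping.single (n + p i + 1) 1)
      = (\<Sum>k=0..<n + r. Poly_Mapping.single (n + k + 1) (1::nat))"
    using sum.permute[OF p, of "\<lambda>k. Poly_Mapping.single (n + k + 1) (1::nat)"] by (simp add: comp_def)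
  finally show ?thesis .
qed

lemma perm_mon_D_eqI:
  assumes p: "p permutes {0..<n + r}" and q: "q permutes {0..<n + r}"
    and eq: "perm_mon_P n r p = perm_mon_P n r q"
  shows "perm_mon_D n r p = perm_mon_D n r q"
proof (rule add_right_imp_eq)
  show "perm_mon_D n r p + shift_mon (n + r) (perm_mon_P n r q)
      = perm_mon_D n r q + shift_mon (n + r) (perm_mon_P n r q)"
    using perm_mon_D_add_shift_mon[OF p] perm_mon_D_add_shift_mon[OF q] unfolding eq by simp
qed

lemma restrict_mon_perm_mon_D:
  assumes "p permutes {0..<n + r}"
  shows "restrict_mon n (perm_mon_D n r p) = perm_mon_P n r p"
  unfolding perm_mon_D_def perm_mon_P_def restrict_mon_sum
  by (rule sum.cong) (use assms in \<open>auto simp: restrict_mon_mon_D permutes_in_image\<close>)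

lemma det_ext_U_diag_ext_V:
  fixes C :: "'a::field rfun mat"
  shows "det (lift_mat (ext_U n r C) * diag_var (2 * n + r) * transpose_mat (lift_mat (ext_V n r)))
    = (\<Sum>p | p permutes {0..<n + r}.
        Poly_Mapping.single (perm_mon_D n r p) (signof p * (\<Prod>i=0..<n + r. C $$ (i, p i))))"
  unfolding perm_mon_D_def
proof (rule det_monomial_entries)
  show "lift_mat (ext_U n r C) * diag_var (2 * n + r) * transpose_mat (lift_mat (ext_V n r))
      \<in> carrier_mat (n + r) (n + r)"
  proof (rule mult_carrier_mat)
    show "lift_mat (ext_U n r C) * diag_var (2 * n + r) \<in> carrier_mat (n + r) (2 * n + r)"
      by (rule mult_carrier_mat[of _ _ "2 * n + r"]) simp_all
  qed simp
qed (rule index_ext_U_diag_ext_V)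

lemma det_lift_plus_mult_diag_var:
  fixes U V A0 :: "'a::field rfun mat"
  assumes U: "U \<in> carrier_mat r n" and V: "V \<in> carrier_mat r n" and A0: "A0 \<in> carrier_mat r r"
  shows "det (lift_mat A0 + lift_mat U * diag_var n * transpose_mat (lift_mat V))
    = (\<Sum>p | p permutes {0..<n + r}. Poly_Mapping.single (perm_mon_P n r p)
        (signof p * (\<Prod>i=0..<n + r. four_block_mat A0 U (- transpose_mat V) (1\<^sub>m n) $$ (i, p i))))"
proof -
  let ?M = "four_block_mat (lift_mat A0) (lift_mat U * diag_var n) (- transpose_mat (lift_mat V)) (1\<^sub>m n)"
  have UX: "lift_mat U * diag_var n \<in> carrier_mat r n" using U by (intro mult_carrier_mat) auto
  have "det (lift_mat A0 + lift_mat U * diag_var n * transpose_mat (lift_mat V)) = det ?M"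
    by (rule det_four_block_mat_minus_one[symmetric]) (use A0 UX V in simp_all)
  also have "\<dots> = (\<Sum>p | p permutes {0..<n + r}. Poly_Mapping.single (perm_mon_P n r p)
      (signof p * (\<Prod>i=0..<n + r. four_block_mat A0 U (- transpose_mat V) (1\<^sub>m n) $$ (i, p i))))"
    unfolding perm_mon_P_def
  proof (rule det_monomial_entries)
    show "?M \<in> carrier_mat (n + r) (n + r)"
      using four_block_carrier_mat[of "lift_mat A0" r r "1\<^sub>m n" n] A0 by (simp add: add.commute)
  qed (use index_schur_block[OF U V A0] in \<open>simp add: add.commute\<close>)
  finally show ?thesis .
qed

lemma homogenized_det:
  fixes U V A0 :: "'a::real_normed_field rfun mat"
  assumes U: "U \<in> carrier_mat r n" and V: "V \<in> carrier_mat r n" and A0: "A0 \<in> carrier_mat r r"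
  defines "P \<equiv> det (lift_mat A0 + lift_mat U * diag_var n * transpose_mat (lift_mat V))"
    and "D \<equiv> det (lift_mat (ext_U n r (four_block_mat A0 U (- transpose_mat V) (1\<^sub>m n)))
      * diag_var (2 * n + r) * transpose_mat (lift_mat (ext_V n r)))"
  shows "P = subst_one n D" and "mp_lim_exists P \<Longrightarrow> mp_lim_exists D"
proof -
  define I where "I = {p. p permutes {0..<n + r}}"
  define a where "a p = signof p * (\<Prod>i=0..<n + r. four_block_mat A0 U (- transpose_mat V) (1\<^sub>m n) $$ (i, p i))"
    for p
  let ?mD = "perm_mon_D n r" and ?mP = "perm_mon_P n r"
  have D_sum: "D = (\<Sum>p\<in>I. Poly_Mapping.single (?mD p) (a p))"
    unfolding D_def I_def a_def by (rule det_ext_U_diag_ext_V)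
  have P_sum: "P = (\<Sum>p\<in>I. Poly_Mapping.single (?mP p) (a p))"
    unfolding P_def I_def a_def by (rule det_lift_plus_mult_diag_var[OF U V A0])
  have restrict: "restrict_mon n (?mD p) = ?mP p" if "p \<in> I" for p
    using that unfolding I_def by (blast intro: restrict_mon_perm_mon_D)
  have determined: "?mD p = ?mD q" if "p \<in> I" "q \<in> I" "?mP p = ?mP q" for p q
    using that unfolding I_def by (blast intro: perm_mon_D_eqI)
  show "P = subst_one n D"
    unfolding P_sum D_sum by (rule subst_one_sum_single[symmetric]) (rule restrict)
  show "mp_lim_exists P \<Longrightarrow> mp_lim_exists D"
    unfolding P_sum D_sum
  proof (rule mp_lim_exists_of_subst_one)
    show "inj_on (restrict_mon n) (Poly_Mapping.keys (\<Sum>p\<in>I. Poly_Mapping.single (?mD p) (a p)))"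
      using restrict determined by (rule inj_on_restrict_mon_keys_sum_single)
  qed (simp only: subst_one_sum_single restrict)
qed

lemma homogenization_exists:
  fixes U V A0 :: "'a::real_normed_field rfun mat"
  assumes "U \<in> carrier_mat r n" "V \<in> carrier_mat r n" "A0 \<in> carrier_mat r r"
  shows "let P = det (lift_mat A0 + lift_mat U * diag_var n * transpose_mat (lift_mat V)) in
    \<exists>U' V'. U' \<in> carrier_mat (n + r) (2 * n + r) \<and> V' \<in> carrier_mat (n + r) (2 * n + r) \<and>
      (let D = det (lift_mat U' * diag_var (2 * n + r) * transpose_mat (lift_mat V')) in
        P = subst_one n D \<and> (mp_lim_exists P \<longrightarrow> mp_lim_exists D))"
  unfolding Let_def
proof (intro exI conjI)
  show "ext_U n r (four_block_mat A0 U (- transpose_mat V) (1\<^sub>m n)) \<in> carrier_mat (n + r) (2 * n + r)"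
    "ext_V n r \<in> carrier_mat (n + r) (2 * n + r)"
    by simp_all
qed (use assms homogenized_det[of U r n V A0] in auto)

theorem lemma12:
  shows "(\<forall>(r::nat) (n::nat) (U::real rfun mat) (V::real rfun mat) (A0::real rfun mat).
      U \<in> carrier_mat r n \<and> V \<in> carrier_mat r n \<and> A0 \<in> carrier_mat r r \<longrightarrow>
      (let P = det (lift_mat A0 + lift_mat U * diag_var n * transpose_mat (lift_mat V)) in
       \<exists>U' V'. U' \<in> carrier_mat (n + r) (2 * n + r) \<and> V' \<in> carrier_mat (n + r) (2 * n + r) \<and>
         (let D = det (lift_mat U' * diag_var (2 * n + r) * transpose_mat (lift_mat V')) in
           P = subst_one n D \<and> (mp_lim_exists P \<longrightarrow> mp_lim_exists D))))
   \<and>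
   (\<forall>(r::nat) (n::nat) (U::complex rfun mat) (V::complex rfun mat) (A0::complex rfun mat).
      U \<in> carrier_mat r n \<and> V \<in> carrier_mat r n \<and> A0 \<in> carrier_mat r r \<longrightarrow>
      (let P = det (lift_mat A0 + lift_mat U * diag_var n * transpose_mat (lift_mat V)) in
       \<exists>U' V'. U' \<in> carrier_mat (n + r) (2 * n + r) \<and> V' \<in> carrier_mat (n + r) (2 * n + r) \<and>
         (let D = det (lift_mat U' * diag_var (2 * n + r) * transpose_mat (lift_mat V')) in
           P = subst_one n D \<and> (mp_lim_exists P \<longrightarrow> mp_lim_exists D))))"
  by (intro conjI allI impI; elim conjE; rule homogenization_exists)

end
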